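(* There is an algorithm that, given strings $A,B$ and a common supersequence $S$ of $A$ and $B$, computes a minimal common supersequence $S'$ of $A$ and $B$ with $S'\subseteq S$ in $O(|S|+|A|+|B|)$ time.
   Context: $X\subseteq S$ means $X$ is a (not necessarily contiguous) subsequence of $S$. A common supersequence of $A$ and $B$ is a string $C$ with $A\subseteq C$ and $B\subseteq C$; it is minimal if no proper subsequence of $C$ is a common supersequence of $A$ and $B$. Time is measured in the standard RAM model with $O(1)$-time character comparisons. *)

theory Defs
  imports Main "HOL-Library.Sublist"
begin

definition common_supersequence :: "'a list \<Rightarrow> 'a list \<Rightarrow> 'a list \<Rightarrow> bool" where
  "common_supersequence A B C \<longleftrightarrow> subseq A C \<and> subseq B C"

definition minimal_common_supersequence :: "'a list \<Rightarrow> 'a list \<Rightarrow> 'a list \<Rightarrow> bool" where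
  "minimal_common_supersequence A B C \<longleftrightarrow>
     common_supersequence A B C \<and>
     (\<forall>D. strict_subseq D C \<longrightarrow> \<not> common_supersequence A B D)"

text \<open>Memory cells are indexed by naturals and hold naturals. Every instruction
costs one step. Characters are natural numbers; comparing two characters
(via subtraction and a zero test) takes O(1) steps.\<close>

datatype instr =
    LoadC nat nat
  | Add nat nat nat
  | Sub nat nat nat
  | LoadI nat nat
  | StoreI nat nat
  | JmpZ nat nat
  | Jmp nat

type_synonym config = "nat \<times> (nat \<Rightarrow> nat)"

fun exec_instr :: "instr \<Rightarrow> config \<Rightarrow> config" where
  "exec_instr (LoadC r c) (pc, M) = (Suc pc, M(r := c))"
| "exec_instr (Add r a b) (pc, M) = (Suc pc, M(r := M a + M b))"
| "exec_instr (Sub r a b) (pc, M) = (Suc pc, M(r := M a - M b))"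
| "exec_instr (LoadI r a) (pc, M) = (Suc pc, M(r := M (M a)))"
| "exec_instr (StoreI a r) (pc, M) = (Suc pc, M(M a := M r))"
| "exec_instr (JmpZ r l) (pc, M) = (if M r = 0 then l else Suc pc, M)"
| "exec_instr (Jmp l) (pc, M) = (l, M)"

definition halted :: "instr list \<Rightarrow> config \<Rightarrow> bool" where
  "halted P c \<longleftrightarrow> length P \<le> fst c"

definition step :: "instr list \<Rightarrow> config \<Rightarrow> config" where
  "step P c = (if halted P c then c else exec_instr (P ! fst c) c)"

definition run :: "instr list \<Rightarrow> nat \<Rightarrow> config \<Rightarrow> config" where
  "run P t c = (step P ^^ t) c"

text \<open>Input layout: M[0] = |A|, M[1] = |B|, M[2] = |S|, then A, B, S stored
consecutively from address 3; all other cells are 0. The program starts at pc 0.\<close>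
definition init_mem :: "nat list \<Rightarrow> nat list \<Rightarrow> nat list \<Rightarrow> nat \<Rightarrow> nat" where
  "init_mem A B S = (\<lambda>i.
     if i = 0 then length A else if i = 1 then length B else if i = 2 then length S
     else if i < 3 + length (A @ B @ S) then (A @ B @ S) ! (i - 3) else 0)"

definition ram_output :: "(nat \<Rightarrow> nat) \<Rightarrow> nat list" where
  "ram_output M = map (\<lambda>i. M (M 1 + i)) [0..<M 0]"

end

theory Submission
  imports Defs
begin

text \<open>Greedy deletion: scan \<open>S\<close> from left to right and drop a letter whenever the letters
kept so far, followed by the unscanned suffix of \<open>S\<close>, still form a common supersequence of \<open>A\<close>
and \<open>B\<close>. No single letter of the result can be deleted, and since supersequences of common
supersequences are common supersequences, the result is minimal. Each test takes constant time:
\<open>X\<close> embeds into \<open>P @ Q\<close> iff the greedy match of a prefix of \<open>X\<close> into \<open>P\<close> and the greedy match of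
a suffix of \<open>X\<close> into \<open>Q\<close> together cover \<open>X\<close>. A backward pass over \<open>S\<close> tabulates the suffix
matches of \<open>A\<close> and \<open>B\<close>, and the forward pass maintains the prefix matches of the kept letters,
so a RAM program needs only \<open>O(|A| + |B| + |S|)\<close> steps.\<close>

section \<open>Greedy matching\<close>

fun match_len :: "'a list \<Rightarrow> 'a list \<Rightarrow> nat" where
  "match_len [] C = 0"
| "match_len (x # X) [] = 0"
| "match_len (x # X) (c # C) = (if x = c then Suc (match_len X C) else match_len (x # X) C)"

lemma match_len_Nil2 [simp]: "match_len X [] = 0"
  by (cases X) auto

lemma match_len_le_length: "match_len X C \<le> length X"
  by (induction X C rule: match_len.induct) auto

lemma subseq_take_match_len: "subseq (take (match_len X C) X) C"
  by (induction X C rule: match_len.induct) auto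

lemma match_len_maximal: "subseq (take k X) C \<Longrightarrow> min k (length X) \<le> match_len X C"
proof (induction X C arbitrary: k rule: match_len.induct)
  case (2 x X)
  then show ?case by (cases k) auto
next
  case (3 x X c C)
  show ?case
  proof (cases k)
    case (Suc k')
    show ?thesis
    proof (cases "x = c")
      case True
      then show ?thesis using 3 Suc by fastforce
    next
      case False
      then have "subseq (take k (x # X)) C" using 3(3) Suc by simp
      then show ?thesis using 3(2)[OF False] False by simp
    qed
  qed simp
qed simp

lemma subseq_take_iff_match_len: "subseq (take k X) C \<longleftrightarrow> min k (length X) \<le> match_len X C"
proof
  assume le: "min k (length X) \<le> match_len X C"
  have "take k X = take k (take (match_len X C) X)"
    using le match_len_le_length[of X C]
    by (cases "k \<le> match_len X C") (auto simp: min_def split: if_splits)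
  moreover have "subseq (take k (take (match_len X C) X)) (take (match_len X C) X)"
    by (rule prefix_imp_subseq, rule take_is_prefix)
  ultimately show "subseq (take k X) C"
    using subseq_take_match_len subseq_order.order_trans by metis
qed (rule match_len_maximal)

lemma match_len_snoc:
  "match_len X (C @ [c]) =
     match_len X C + (if match_len X C < length X \<and> X ! match_len X C = c then 1 else 0)"
  by (induction X C rule: match_len.induct) auto

lemma subseq_rev: "subseq xs ys \<Longrightarrow> subseq (rev xs) (rev ys)"
  by (induction rule: list_emb.induct) (auto intro: subseq_rev_drop_many)

lemma subseq_rev_iff [simp]: "subseq (rev xs) (rev ys) \<longleftrightarrow> subseq xs ys"
  using subseq_rev by fastforce

lemma subseq_append_iff_match_len:
  "subseq X (P @ Q) \<longleftrightarrow> length X \<le> match_len X P + match_len (rev X) (rev Q)"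
proof
  assume "subseq X (P @ Q)"
  then obtain X1 X2 where X: "X = X1 @ X2" "subseq X1 P" "subseq X2 Q"
    by (auto elim: subseq_appendE)
  have "length X1 \<le> match_len X P"
    using match_len_maximal[of "length X1" X P] X by simp
  moreover have "length X2 \<le> match_len (rev X) (rev Q)"
    using match_len_maximal[of "length X2" "rev X" "rev Q"] X by simp
  ultimately show "length X \<le> match_len X P + match_len (rev X) (rev Q)"
    using X by simp
next
  assume len: "length X \<le> match_len X P + match_len (rev X) (rev Q)"
  define k where "k = match_len X P"
  have "subseq (take (length X - k) (rev X)) (rev Q)"
    using len by (subst subseq_take_iff_match_len) (simp add: k_def)
  then have "subseq (drop k X) Q"
    by (simp add: rev_drop[symmetric])
  with subseq_take_match_len[of X P] have "subseq (take k X @ drop k X) (P @ Q)"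
    unfolding k_def by (rule list_emb_append_mono)
  then show "subseq X (P @ Q)" by simp
qed

definition suffix_match :: "'a list \<Rightarrow> 'a list \<Rightarrow> nat \<Rightarrow> nat" where
  "suffix_match X S j = match_len (rev X) (rev (drop j S))"

lemma suffix_match_length [simp]: "suffix_match X S (length S) = 0"
  by (simp add: suffix_match_def)

lemma suffix_match_Suc:
  assumes "j < length S"
  shows "suffix_match X S j = suffix_match X S (Suc j) +
    (if suffix_match X S (Suc j) < length X \<and>
        X ! (length X - Suc (suffix_match X S (Suc j))) = S ! j then 1 else 0)"
proof -
  have "rev (drop j S) = rev (drop (Suc j) S) @ [S ! j]"
    using assms by (simp add: Cons_nth_drop_Suc[symmetric])
  then show ?thesis
    by (auto simp: suffix_match_def match_len_snoc rev_nth)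
qed

lemma common_supersequence_append_drop_iff:
  "common_supersequence A B (P @ drop j S) \<longleftrightarrow>
     length A \<le> match_len A P + suffix_match A S j \<and> length B \<le> match_len B P + suffix_match B S j"
  unfolding common_supersequence_def suffix_match_def subseq_append_iff_match_len ..

lemma common_supersequence_subseq:
  "common_supersequence A B D \<Longrightarrow> subseq D E \<Longrightarrow> common_supersequence A B E"
  unfolding common_supersequence_def using subseq_order.order_trans by blast

section \<open>Greedy deletion\<close>

lemma strict_subseq_imp_subseq_delete:
  "strict_subseq D C \<Longrightarrow> \<exists>i<length C. subseq D (take i C @ drop (Suc i) C)"
proof (induction C arbitrary: D)
  case (Cons x C)
  show ?case
  proof (cases "\<exists>D'. D = x # D' \<and> subseq D' C")
    case True
    then obtain D' where D: "D = x # D'" "subseq D' C" by blast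
    then have "strict_subseq D' C" using Cons.prems by (auto simp: strict_subseq_def)
    then obtain i where "i < length C" "subseq D' (take i C @ drop (Suc i) C)"
      using Cons.IH by blast
    then show ?thesis using D by (intro exI[of _ "Suc i"]) auto
  next
    case False
    then have "subseq D C"
      using Cons.prems by (cases D) (auto simp: strict_subseq_def split: if_splits)
    then show ?thesis by (intro exI[of _ 0]) auto
  qed
qed (auto simp: strict_subseq_def)

lemma minimal_common_supersequence_if_no_deletion:
  assumes "common_supersequence A B C"
    and "\<And>i. i < length C \<Longrightarrow> \<not> common_supersequence A B (take i C @ drop (Suc i) C)"
  shows "minimal_common_supersequence A B C"
  unfolding minimal_common_supersequence_def
  using assms strict_subseq_imp_subseq_delete common_supersequence_subseq by blast

fun prune :: "'a list \<Rightarrow> 'a list \<Rightarrow> 'a list \<Rightarrow> nat \<Rightarrow> 'a list" where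
  "prune A B S 0 = []"
| "prune A B S (Suc k) =
     (if common_supersequence A B (prune A B S k @ drop (Suc k) S) then prune A B S k
      else prune A B S k @ [S ! k])"

lemma subseq_prune_take: "k \<le> length S \<Longrightarrow> subseq (prune A B S k) (take k S)"
  by (induction k) (auto simp: take_Suc_conv_app_nth intro: subseq_rev_drop_many)

lemma common_supersequence_prune_append:
  "common_supersequence A B S \<Longrightarrow> k \<le> length S \<Longrightarrow>
     common_supersequence A B (prune A B S k @ drop k S)"
  by (induction k) (auto simp: Cons_nth_drop_Suc[symmetric])

lemma prune_no_deletion:
  "k \<le> length S \<Longrightarrow> i < length (prune A B S k) \<Longrightarrow>
     \<not> common_supersequence A B (take i (prune A B S k) @ drop (Suc i) (prune A B S k) @ drop k S)"
proof (induction k arbitrary: i)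
  case (Suc k)
  define P where "P = prune A B S k"
  have drop_k: "drop k S = S ! k # drop (Suc k) S"
    using Suc.prems by (simp add: Cons_nth_drop_Suc)
  show ?case
  proof (cases "common_supersequence A B (P @ drop (Suc k) S)")
    case True
    then have P': "prune A B S (Suc k) = P" by (simp add: P_def)
    then have "\<not> common_supersequence A B (take i P @ drop (Suc i) P @ drop k S)"
      using Suc by (simp add: P_def)
    moreover have "subseq (take i P @ drop (Suc i) P @ drop (Suc k) S)
        (take i P @ drop (Suc i) P @ drop k S)"
      unfolding drop_k by (intro list_emb_append_mono) auto
    ultimately show ?thesis using P' common_supersequence_subseq by metis
  next
    case False
    then have P': "prune A B S (Suc k) = P @ [S ! k]" by (simp add: P_def)
    show ?thesis
    proof (cases "i < length P")
      case True
      then show ?thesis using Suc P' by (simp add: P_def drop_k)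
    next
      case False
      then have "i = length P" using Suc.prems P' by simp
      then show ?thesis using \<open>\<not> common_supersequence A B (P @ drop (Suc k) S)\<close> P' by simp
    qed
  qed
qed simp

theorem minimal_common_supersequence_prune:
  assumes "common_supersequence A B S"
  shows "minimal_common_supersequence A B (prune A B S (length S))"
proof (rule minimal_common_supersequence_if_no_deletion)
  show "common_supersequence A B (prune A B S (length S))"
    using common_supersequence_prune_append[OF assms, of "length S"] by simp
  show "\<not> common_supersequence A B (take i (prune A B S (length S)) @
      drop (Suc i) (prune A B S (length S)))"
    if "i < length (prune A B S (length S))" for i
    using prune_no_deletion[OF order_refl that] by simp
qed

section \<open>Executing RAM programs\<close>

lemma run_Suc: "run P (Suc t) c = run P t (step P c)"
  unfolding run_def by (simp add: funpow_swap1)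

lemma run_add: "run P (t1 + t2) c = run P t2 (run P t1 c)"
  unfolding run_def by (metis add.commute comp_apply funpow_add)

definition reaches_within ::
  "instr list \<Rightarrow> nat \<Rightarrow> config \<Rightarrow> nat \<Rightarrow> ((nat \<Rightarrow> nat) \<Rightarrow> bool) \<Rightarrow> bool" where
  "reaches_within P t c pc Q \<longleftrightarrow> (\<exists>t' M. t' \<le> t \<and> run P t' c = (pc, M) \<and> Q M)"

lemma reaches_within_stop: "Q M \<Longrightarrow> reaches_within P t (pc, M) pc Q"
  unfolding reaches_within_def run_def by (intro exI[of _ 0]) auto

lemma reaches_within_stop_at: "pc = pc' \<Longrightarrow> Q M \<Longrightarrow> reaches_within P t (pc, M) pc' Q"
  by (simp add: reaches_within_stop)

lemma reaches_within_step:
  assumes "pc < length P" "0 < t" "reaches_within P (t - 1) (exec_instr (P ! pc) (pc, M)) pc' Q"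
  shows "reaches_within P t (pc, M) pc' Q"
proof -
  obtain t' M' where "t' \<le> t - 1" "run P t' (exec_instr (P ! pc) (pc, M)) = (pc', M')" "Q M'"
    using assms(3) unfolding reaches_within_def by blast
  then show ?thesis
    unfolding reaches_within_def using assms(1,2)
    by (intro exI[of _ "Suc t'"] exI[of _ M']) (auto simp: run_Suc step_def halted_def)
qed

lemma reaches_within_seq:
  assumes "reaches_within P t c pc Q"
    and "\<And>M. Q M \<Longrightarrow> reaches_within P u (pc, M) pc' R"
  shows "reaches_within P (t + u) c pc' R"
proof -
  obtain t' M where 1: "t' \<le> t" "run P t' c = (pc, M)" "Q M"
    using assms(1) unfolding reaches_within_def by blast
  obtain u' M' where 2: "u' \<le> u" "run P u' (pc, M) = (pc', M')" "R M'"
    using assms(2)[OF 1(3)] unfolding reaches_within_def by blast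
  show ?thesis
    unfolding reaches_within_def using 1 2
    by (intro exI[of _ "t' + u'"] exI[of _ M']) (simp add: run_add)
qed

lemma reaches_within_mono:
  "reaches_within P t c pc Q \<Longrightarrow> t \<le> t' \<Longrightarrow> (\<And>M. Q M \<Longrightarrow> Q' M) \<Longrightarrow> reaches_within P t' c pc Q'"
  unfolding reaches_within_def by (meson order_trans)

lemma reaches_within_loop:
  assumes "\<And>k M. k < m \<Longrightarrow> I k M \<Longrightarrow> reaches_within P t (pc, M) pc (I (Suc k))"
    and "I 0 M"
  shows "reaches_within P (m * t) (pc, M) pc (I m)"
proof -
  have "reaches_within P (k * t) (pc, M) pc (I k)" if "k \<le> m" for k
    using that
  proof (induction k)
    case 0
    then show ?case using assms(2) by (simp add: reaches_within_stop)
  next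
    case (Suc k)
    then have "reaches_within P (k * t) (pc, M) pc (I k)" by simp
    then have "reaches_within P (k * t + t) (pc, M) pc (I (Suc k))"
      by (rule reaches_within_seq) (use Suc.prems assms(1) in simp)
    then show ?case by (simp add: add.commute)
  qed
  then show ?thesis by simp
qed

lemma reaches_within_halted:
  assumes "reaches_within P t c (length P) Q"
  shows "\<exists>t'\<le>t. halted P (run P t' c) \<and> Q (snd (run P t' c))"
  using assms unfolding reaches_within_def halted_def by force

definition stored_at :: "(nat \<Rightarrow> nat) \<Rightarrow> nat \<Rightarrow> nat list \<Rightarrow> bool" where
  "stored_at M a xs \<longleftrightarrow> (\<forall>i<length xs. M (a + i) = xs ! i)"

lemma stored_at_Nil [simp]: "stored_at M a []"
  by (simp add: stored_at_def)

lemma stored_at_Cons [simp]: "stored_at M a (x # xs) \<longleftrightarrow> M a = x \<and> stored_at M (Suc a) xs"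
  by (auto simp: stored_at_def nth_Cons split: nat.splits)

lemma stored_at_snoc: "stored_at M a (xs @ [x]) \<longleftrightarrow> stored_at M a xs \<and> M (a + length xs) = x"
  by (induction xs arbitrary: a) auto

lemma stored_at_upd_outside [simp]:
  assumes "a' < a \<or> a + length xs \<le> a'"
  shows "stored_at (M(a' := v)) a xs \<longleftrightarrow> stored_at M a xs"
proof -
  have "\<forall>i<length xs. a + i \<noteq> a'" using assms by auto
  then show ?thesis by (simp add: stored_at_def)
qed

lemma stored_at_nth: "stored_at M a xs \<Longrightarrow> i < length xs \<Longrightarrow> M (a + i) = xs ! i"
  by (simp add: stored_at_def)

lemma stored_at_append_nth1: "stored_at M a (xs @ ys) \<Longrightarrow> i < length xs \<Longrightarrow> M (a + i) = xs ! i"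
  by (simp add: stored_at_def nth_append)

lemma stored_at_append_nth2:
  "stored_at M a (xs @ ys) \<Longrightarrow> i < length ys \<Longrightarrow> M (a + length xs + i) = ys ! i"
  using stored_at_nth[of M a "xs @ ys" "length xs + i"] by (simp add: add.assoc)

lemma stored_at_drop_nth: "stored_at M a (drop i xs) \<Longrightarrow> i < length xs \<Longrightarrow> M a = xs ! i"
  using stored_at_nth[of M a "drop i xs" 0] by simp

lemma stored_at_init_mem: "stored_at (init_mem A B S) 3 (A @ B @ S)"
  by (simp add: stored_at_def init_mem_def)

lemma ram_output_eqI: "M 0 = length xs \<Longrightarrow> stored_at M (M 1) xs \<Longrightarrow> ram_output M = xs"
  unfolding ram_output_def stored_at_def by (auto intro: nth_equalityI)

section \<open>The program\<close>

text \<open>With \<open>T = |A| + |B| + |S| > 0\<close>, the cell \<open>x = 4 T + |B|\<close> lies beyond the input; storing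
\<open>3 T + |B|\<close> there and \<open>|S|\<close> at \<open>x + 50\<close> frees cells 1 and 2 while keeping \<open>T\<close>, \<open>|B|\<close>
and \<open>|S|\<close> recoverable.\<close>

definition setup_code :: "instr list" where
  "setup_code =
     [Add 0 0 1, Add 0 0 2, JmpZ 0 174,
      Add 1 1 0, Add 1 1 0, Add 1 1 0, Add 0 0 1, StoreI 0 1,
      LoadC 1 50, Add 0 0 1, StoreI 0 2, LoadC 2 1]"

text \<open>The input cells 3--23 are moved to \<open>x + 51\<close> onwards, to serve as registers.\<close>

definition save_code :: "instr list" where
  "save_code = concat (map (\<lambda>i. [Add 0 0 2, StoreI 0 (3 + i)]) [0..<21])"

definition register_code :: "instr list" where
  "register_code =
     [LoadC 1 71, Sub 1 0 1, LoadI 1 1, LoadC 3 1,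
      LoadC 18 21, Sub 23 0 18, Add 8 23 3, LoadI 4 23,
      LoadC 18 50, Sub 19 23 18, Sub 7 19 1,
      Sub 6 1 7, Sub 6 6 7, Sub 6 6 7, Sub 5 7 6, Sub 5 5 4,
      Add 9 8 5, Add 10 9 6, Add 11 10 4, Add 12 11 4, Add 12 12 3, Add 13 12 4, Add 13 13 3,
      LoadC 14 21]"

definition copy_code :: "instr list" where
  "copy_code =
     [Sub 18 7 14, JmpZ 18 87,
      LoadC 19 3, Add 19 19 14, LoadI 20 19, Add 21 8 14, StoreI 21 20, Add 14 14 3, Jmp 78,
      LoadC 14 0, Add 14 14 4, LoadC 15 0, LoadC 16 0,
      Add 23 11 4, StoreI 23 15, Add 23 12 4, StoreI 23 16]"

text \<open>Letters \<open>v, y\<close> are compared by testing \<open>(v - y) + (y - v)\<close> for zero.\<close>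

definition backward_code :: "instr list" where
  "backward_code =
     [JmpZ 14 126, Sub 14 14 3, Add 23 10 14, LoadI 20 23,
      Sub 18 5 15, JmpZ 18 110, Sub 18 9 15, Sub 18 18 3, LoadI 19 18,
      Sub 21 19 20, Sub 22 20 19, Add 21 21 22, JmpZ 21 109, Jmp 110, Add 15 15 3,
      Add 23 11 14, StoreI 23 15,
      Sub 18 6 16, JmpZ 18 123, Sub 18 10 16, Sub 18 18 3, LoadI 19 18,
      Sub 21 19 20, Sub 22 20 19, Add 21 21 22, JmpZ 21 122, Jmp 123, Add 16 16 3,
      Add 23 12 14, StoreI 23 16, Jmp 95,
      LoadC 14 0, LoadC 15 0, LoadC 16 0, LoadC 17 0]"

text \<open>The letter \<open>S ! k\<close> is dropped iff \<open>|A| \<le> fa + da\<close> and \<open>|B| \<le> fb + db\<close>, where \<open>fa, fb\<close> are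
the greedy prefix matches of \<open>A, B\<close> in the kept letters and \<open>da, db\<close> the tabulated suffix
matches in \<open>drop (Suc k) S\<close>.\<close>

definition forward_code :: "instr list" where
  "forward_code =
     [Sub 18 4 14, JmpZ 18 170,
      Add 23 10 14, LoadI 20 23, Add 14 14 3,
      Add 23 11 14, LoadI 21 23, Add 23 12 14, LoadI 22 23,
      Add 18 15 21, Sub 18 5 18, JmpZ 18 143, Jmp 146,
      Add 18 16 22, Sub 18 6 18, JmpZ 18 130,
      Add 23 13 17, StoreI 23 20, Add 17 17 3,
      Sub 18 5 15, JmpZ 18 159, Add 18 8 15, LoadI 19 18,
      Sub 21 19 20, Sub 22 20 19, Add 21 21 22, JmpZ 21 158, Jmp 159, Add 15 15 3,
      Sub 18 6 16, JmpZ 18 169, Add 18 9 16, LoadI 19 18,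
      Sub 21 19 20, Sub 22 20 19, Add 21 21 22, JmpZ 21 168, Jmp 169, Add 16 16 3,
      Jmp 130]"

definition output_code :: "instr list" where
  "output_code = [LoadC 0 0, Add 0 0 17, LoadC 1 0, Add 1 1 13]"

definition prog :: "instr list" where
  "prog = setup_code @ save_code @ register_code @ copy_code @ backward_code @ forward_code @
     output_code"

schematic_goal save_code_unfolded: "save_code = ?instrs"
  by (simp add: save_code_def upt_rec)

lemma code_lengths:
  "length setup_code = 12" "length save_code = 42" "length register_code = 24"
  "length copy_code = 17" "length backward_code = 35" "length forward_code = 40"
  "length output_code = 4"
  by (simp_all add: setup_code_def save_code_unfolded register_code_def copy_code_def
      backward_code_def forward_code_def output_code_def)

lemma length_prog: "length prog = 174"
  by (simp add: prog_def code_lengths)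

lemma nth_prog:
  "prog ! k =
    (if k < 12 then setup_code ! k else if k < 54 then save_code ! (k - 12)
     else if k < 78 then register_code ! (k - 54) else if k < 95 then copy_code ! (k - 78)
     else if k < 130 then backward_code ! (k - 95) else if k < 170 then forward_code ! (k - 130)
     else output_code ! (k - 170))"
  by (auto simp: prog_def nth_append code_lengths)

lemmas code_defs = setup_code_def save_code_unfolded register_code_def copy_code_def
  backward_code_def forward_code_def output_code_def

section \<open>Correctness of the program\<close>

lemma low_address_neq:
  fixes a :: nat
  shows "24 \<le> a \<Longrightarrow> numeral k < (24::nat) \<Longrightarrow> a \<noteq> numeral k"
    and "24 \<le> a \<Longrightarrow> numeral k < (24::nat) \<Longrightarrow> numeral k \<noteq> a"
  by auto

lemmas exec_simps = length_prog nth_prog code_defs low_address_neq trans_le_add1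

lemma absdiff_eq_0_iff: "(a::nat) - b + (b - a) = 0 \<longleftrightarrow> a = b"
  by auto

text \<open>Cells below 24 are registers and all data lives above: the input copied to \<open>b\<close>, the two
tables of suffix matches and the output. Register 14 is the loop index, 15--17 hold the match
lengths and the output length, 18--23 are scratch.\<close>

definition layout :: "nat list \<Rightarrow> nat list \<Rightarrow> nat list \<Rightarrow> nat \<Rightarrow> (nat \<Rightarrow> nat) \<Rightarrow> bool" where
  "layout A B S b M \<longleftrightarrow>
     M 3 = 1 \<and> M 4 = length S \<and> M 5 = length A \<and> M 6 = length B \<and> M 7 = length (A @ B @ S) \<and>
     M 8 = b \<and> M 9 = b + length A \<and> M 10 = b + length (A @ B) \<and>
     M 11 = b + length (A @ B @ S) \<and> M 12 = b + length (A @ B @ S) + Suc (length S) \<and>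
     M 13 = b + length (A @ B @ S) + Suc (length S) + Suc (length S)"

definition copy_inv :: "nat list \<Rightarrow> nat list \<Rightarrow> nat list \<Rightarrow> nat \<Rightarrow> nat \<Rightarrow> (nat \<Rightarrow> nat) \<Rightarrow> bool" where
  "copy_inv A B S b i M \<longleftrightarrow> layout A B S b M \<and> M 14 = i \<and> 21 \<le> i \<and>
     stored_at M b (take i (A @ B @ S)) \<and> stored_at M (3 + i) (drop i (A @ B @ S))"

definition backward_inv :: "nat list \<Rightarrow> nat list \<Rightarrow> nat list \<Rightarrow> nat \<Rightarrow> nat \<Rightarrow> (nat \<Rightarrow> nat) \<Rightarrow> bool" where
  "backward_inv A B S b j M \<longleftrightarrow> layout A B S b M \<and> stored_at M b (A @ B @ S) \<and>
     j \<le> length S \<and> M 14 = j \<and> M 15 = suffix_match A S j \<and> M 16 = suffix_match B S j \<and>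
     stored_at M (b + length (A @ B @ S) + j) (map (suffix_match A S) [j..<Suc (length S)]) \<and>
     stored_at M (b + length (A @ B @ S) + Suc (length S) + j)
       (map (suffix_match B S) [j..<Suc (length S)])"

definition forward_inv :: "nat list \<Rightarrow> nat list \<Rightarrow> nat list \<Rightarrow> nat \<Rightarrow> nat \<Rightarrow> (nat \<Rightarrow> nat) \<Rightarrow> bool" where
  "forward_inv A B S b k M \<longleftrightarrow> layout A B S b M \<and> stored_at M b (A @ B @ S) \<and>
     stored_at M (b + length (A @ B @ S)) (map (suffix_match A S) [0..<Suc (length S)]) \<and>
     stored_at M (b + length (A @ B @ S) + Suc (length S))
       (map (suffix_match B S) [0..<Suc (length S)]) \<and>
     k \<le> length S \<and> M 14 = k \<and> M 15 = match_len A (prune A B S k) \<and>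
     M 16 = match_len B (prune A B S k) \<and> M 17 = length (prune A B S k) \<and>
     stored_at M (b + length (A @ B @ S) + Suc (length S) + Suc (length S)) (prune A B S k)"

lemma layout_upd [simp]:
  "a < 3 \<or> 13 < a \<Longrightarrow> layout A B S b (M(a := v)) \<longleftrightarrow> layout A B S b M"
  unfolding layout_def by auto

lemma prog_setup:
  assumes M: "M 0 = la" "M 1 = lb" "M 2 = n" and T: "la + lb + n \<noteq> 0"
  defines "x \<equiv> 4 * (la + lb + n) + lb"
  shows "reaches_within prog 12 (0, M) 12
    (\<lambda>M'. M' 0 = x + 50 \<and> M' 2 = 1 \<and> M' x = 3 * (la + lb + n) + lb \<and> M' (x + 50) = n \<and>
       (\<forall>a. a \<notin> {0, 1, 2, x, x + 50} \<longrightarrow> M' a = M a))"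
proof -
  have M1: "M (Suc 0) = lb" using M(2) by simp
  have x: "la + lb + n + (lb + (la + lb + n) + (la + lb + n) + (la + lb + n)) = x"
    by (simp add: x_def)
  have "4 \<le> x"
    using T unfolding x_def by (cases "la + lb + n") simp_all
  then have x': "x \<noteq> 0" "x \<noteq> Suc 0" "x \<noteq> 2" by simp_all
  \<comment> \<open>Counting from pc 0 yields \<open>Suc\<close>-terms rather than numerals, so the target pc is
    recognised arithmetically.\<close>
  show ?thesis
    apply ((rule reaches_within_stop_at, linarith, use T in \<open>auto simp: x_def\<close>)
        | (rule reaches_within_step;
           simp del: add_is_0 add_eq_0_iff_both_eq_0 add: exec_simps M M1 T x x'))+
    done
qed

lemma prog_save:
  assumes M: "M 0 = p" "M 2 = 1" and p: "24 \<le> p"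
  shows "reaches_within prog 42 (12, M) 54
    (\<lambda>M'. M' 0 = p + 21 \<and> M' 2 = 1 \<and> stored_at M' (Suc p) (map (\<lambda>i. M (3 + i)) [0..<21]) \<and>
       (\<forall>a. a \<noteq> 0 \<and> (a \<le> p \<or> p + 21 < a) \<longrightarrow> M' a = M a))"
  using p apply -
  apply ((rule reaches_within_stop, simp add: upt_rec M)
      | (rule reaches_within_step; simp add: exec_simps M))+
  done

lemma prog_registers:
  assumes M: "M 0 = x + 71" "M x = 3 * (la + lb + n) + lb" "M (x + 50) = n"
    and x: "x = 4 * (la + lb + n) + lb" and T: "la + lb + n \<noteq> 0"
  shows "reaches_within prog 24 (54, M) 78
    (\<lambda>M'. M' 3 = 1 \<and> M' 4 = n \<and> M' 5 = la \<and> M' 6 = lb \<and> M' 7 = la + lb + n \<and>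
       M' 8 = x + 51 \<and> M' 9 = x + 51 + la \<and> M' 10 = x + 51 + la + lb \<and>
       M' 11 = x + 51 + la + lb + n \<and> M' 12 = x + 51 + la + lb + n + Suc n \<and>
       M' 13 = x + 51 + la + lb + n + Suc n + Suc n \<and> M' 14 = 21 \<and>
       (\<forall>a. a \<noteq> 1 \<and> (a < 3 \<or> 23 < a) \<longrightarrow> M' a = M a))"
proof -
  have "4 \<le> x"
    using T unfolding x by (cases "la + lb + n") simp_all
  then have x': "x \<noteq> Suc 0" "x + 50 \<noteq> Suc 0" "x + 50 \<noteq> 3" "x + 50 \<noteq> 18" "x + 50 \<noteq> 23"
    by simp_all
  have M': "M (50 + x) = n" using M(3) by (simp add: add.commute)
  show ?thesis
    apply ((rule reaches_within_stop, simp add: x)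
        | (rule reaches_within_step; simp add: exec_simps M M' x'))+
    done
qed

lemma prog_save_input:
  assumes ne: "A @ B @ S \<noteq> []"
  defines "x \<equiv> 4 * (length A + length B + length S) + length B"
  shows "reaches_within prog 54 (0, init_mem A B S) 54
    (\<lambda>M. M 0 = x + 71 \<and> M x = 3 * (length A + length B + length S) + length B \<and>
       M (x + 50) = length S \<and> stored_at M (x + 51) (take 21 (A @ B @ S)) \<and>
       stored_at M 24 (drop 21 (A @ B @ S)))"
    (is "reaches_within _ _ _ _ ?Q")
proof -
  define xs where "xs = A @ B @ S"
  have T: "length A + length B + length S \<noteq> 0" using ne by simp
  have x: "3 + length xs \<le> x"
    using T unfolding x_def by (cases "length A + length B + length S") (simp_all add: xs_def)
  have init: "init_mem A B S 0 = length A" "init_mem A B S 1 = length B"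
    "init_mem A B S 2 = length S"
    by (simp_all add: init_mem_def)
  have input: "init_mem A B S (3 + i) = xs ! i" if "i < length xs" for i
    using stored_at_nth[OF stored_at_init_mem, of i A B S] that by (simp add: xs_def)
  have "reaches_within prog (12 + 42) (0, init_mem A B S) 54 ?Q"
  proof (rule reaches_within_seq[OF prog_setup[OF init T, folded x_def]])
    fix M1
    assume "M1 0 = x + 50 \<and> M1 2 = 1 \<and> M1 x = 3 * (length A + length B + length S) + length B \<and>
      M1 (x + 50) = length S \<and> (\<forall>a. a \<notin> {0, 1, 2, x, x + 50} \<longrightarrow> M1 a = init_mem A B S a)"
    then have M1: "M1 0 = x + 50" "M1 2 = 1" "M1 x = 3 * (length A + length B + length S) + length B"
      "M1 (x + 50) = length S" "\<And>a. a \<notin> {0, 1, 2, x, x + 50} \<Longrightarrow> M1 a = init_mem A B S a"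
      by blast+
    show "reaches_within prog 42 (12, M1) 54 ?Q"
    proof (rule reaches_within_mono[OF prog_save[OF M1(1,2)]])
      fix M2
      assume M2: "M2 0 = x + 50 + 21 \<and> M2 2 = 1 \<and>
        stored_at M2 (Suc (x + 50)) (map (\<lambda>i. M1 (3 + i)) [0..<21]) \<and>
        (\<forall>a. a \<noteq> 0 \<and> (a \<le> x + 50 \<or> x + 50 + 21 < a) \<longrightarrow> M2 a = M1 a)"
      have "M2 (x + 51 + i) = xs ! i" if "i < length (take 21 xs)" for i
      proof -
        have "M2 (x + 51 + i) = M1 (3 + i)"
          using M2 that stored_at_nth[of M2 "Suc (x + 50)" "map (\<lambda>i. M1 (3 + i)) [0..<21]" i]
          by (simp add: ac_simps)
        also have "\<dots> = xs ! i" using M1(5)[of "3 + i"] input[of i] that x by simp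
        finally show ?thesis .
      qed
      moreover have "M2 (24 + i) = xs ! (21 + i)" if "i < length (drop 21 xs)" for i
      proof -
        have i: "21 + i < length xs" "24 + i < x" using that x by simp_all
        then have "M2 (24 + i) = M1 (24 + i)" using M2 by simp
        also have "\<dots> = xs ! (21 + i)" using M1(5)[of "24 + i"] input[OF i(1)] i(2) by simp
        finally show ?thesis .
      qed
      ultimately show "?Q M2"
        unfolding xs_def[symmetric] using M2 M1(3,4) x by (simp add: stored_at_def)
    qed (use x in simp_all)
  qed
  then show ?thesis by simp
qed

lemma prog_prologue:
  assumes ne: "A @ B @ S \<noteq> []"
  defines "b \<equiv> 4 * length (A @ B @ S) + length B + 51"
  shows "reaches_within prog 78 (0, init_mem A B S) 78 (copy_inv A B S b 21)"
proof -
  define x where "x = 4 * (length A + length B + length S) + length B"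
  have T: "length A + length B + length S \<noteq> 0" using ne by simp
  have "reaches_within prog (54 + 24) (0, init_mem A B S) 78 (copy_inv A B S b 21)"
  proof (rule reaches_within_seq[OF prog_save_input[OF ne, folded x_def]])
    fix M
    assume "M 0 = x + 71 \<and> M x = 3 * (length A + length B + length S) + length B \<and>
      M (x + 50) = length S \<and> stored_at M (x + 51) (take 21 (A @ B @ S)) \<and>
      stored_at M 24 (drop 21 (A @ B @ S))"
    then have M: "M 0 = x + 71" "M x = 3 * (length A + length B + length S) + length B"
      "M (x + 50) = length S" "stored_at M (x + 51) (take 21 (A @ B @ S))"
      "stored_at M 24 (drop 21 (A @ B @ S))"
      by simp_all
    show "reaches_within prog 24 (54, M) 78 (copy_inv A B S b 21)"
      by (rule reaches_within_mono[OF prog_registers[OF M(1-3) x_def T]])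
        (use M(4,5) in \<open>auto simp: copy_inv_def layout_def stored_at_def b_def x_def\<close>)
  qed
  then show ?thesis by simp
qed

lemma prog_copy_step:
  assumes inv: "copy_inv A B S b i M" and i: "i < length (A @ B @ S)"
    and b: "24 + length (A @ B @ S) \<le> b"
  shows "reaches_within prog 9 (78, M) 78 (copy_inv A B S b (Suc i))"
proof -
  define xs where "xs = A @ B @ S"
  have M: "layout A B S b M" "M 14 = i" "21 \<le> i" "stored_at M b (take i xs)"
    "stored_at M (3 + i) (drop i xs)"
    using inv unfolding copy_inv_def xs_def[symmetric] by simp_all
  have R: "M 3 = 1" "M 7 = length xs" "M 8 = b"
    using M(1) by (simp_all add: layout_def xs_def)
  have x: "M (3 + i) = xs ! i"
    using M(5) i unfolding xs_def by (rule stored_at_drop_nth)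
  have b': "24 \<le> b" "3 + length xs \<le> b" using b by (simp_all add: xs_def)
  have i': "i < length xs" using i by (simp add: xs_def)
  have rest: "stored_at M (4 + i) (drop (Suc i) xs)"
    using M(5) i' by (simp add: Cons_nth_drop_Suc[symmetric])
  show ?thesis
    unfolding copy_inv_def xs_def[symmetric]
    using i' b' \<open>21 \<le> i\<close> apply -
    apply (rule reaches_within_step; simp add: exec_simps R M(2))
    apply ((rule reaches_within_stop | rule reaches_within_step; simp add: exec_simps R M(2) x)+)
    apply (simp add: exec_simps M(1,4) rest take_Suc_conv_app_nth stored_at_snoc)
    done
qed

lemma prog_copy_exit:
  assumes inv: "copy_inv A B S b i M" and i: "length (A @ B @ S) \<le> i"
    and b: "24 + length (A @ B @ S) \<le> b"
  shows "reaches_within prog 10 (78, M) 95 (backward_inv A B S b (length S))"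
proof -
  define xs where "xs = A @ B @ S"
  have M: "layout A B S b M" "M 14 = i" "stored_at M b xs"
    using inv i unfolding copy_inv_def xs_def[symmetric] by simp_all
  have R: "M 4 = length S" "M 7 = length xs" "M 11 = b + length xs" "M 12 = b + length xs + Suc (length S)"
    using M(1) by (simp_all add: layout_def xs_def)
  have b': "24 + length xs \<le> b" using b by (simp add: xs_def)
  show ?thesis
    unfolding backward_inv_def xs_def[symmetric]
    using b' i apply -
    apply ((rule reaches_within_stop
        | rule reaches_within_step; simp add: exec_simps R M(2) xs_def[symmetric])+)
    apply (simp add: exec_simps M(1,3))
    done
qed

lemma prog_backward_step:
  assumes inv: "backward_inv A B S b (Suc j) M" and b: "24 + length (A @ B @ S) \<le> b"
  shows "reaches_within prog 35 (95, M) 95 (backward_inv A B S b j)"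
proof -
  define g h where "g = suffix_match A S (Suc j)" and "h = suffix_match B S (Suc j)"
  have M: "layout A B S b M" "stored_at M b (A @ B @ S)" "Suc j \<le> length S" "M 14 = Suc j"
    "M 15 = g" "M 16 = h"
    using inv unfolding backward_inv_def g_def h_def by blast+
  have tables:
    "stored_at M (Suc (b + (length A + (length B + length S)) + j))
       (map (suffix_match A S) [Suc j..<Suc (length S)])"
    "stored_at M (Suc (Suc (b + (length A + (length B + length S)) + length S + j)))
       (map (suffix_match B S) [Suc j..<Suc (length S)])"
    using inv unfolding backward_inv_def by (simp_all del: upt_Suc)
  have upt_j: "[j..<Suc (length S)] = j # [Suc j..<Suc (length S)]"
    using M(3) by (simp add: upt_conv_Cons del: upt_Suc)
  have R: "M 3 = 1" "M 5 = length A" "M 6 = length B" "M 9 = b + length A"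
    "M 10 = b + (length A + length B)" "M 11 = b + length (A @ B @ S)"
    "M 12 = b + length (A @ B @ S) + Suc (length S)"
    using M(1) by (simp_all add: layout_def)
  have y: "M (b + (length A + length B) + j) = S ! j"
    using stored_at_append_nth2[of M b "A @ B" S j] M(2,3) by simp
  have a: "M (b + length A - Suc g) = A ! (length A - Suc g)" "24 \<le> b + length A - Suc g"
    if "g < length A"
    using stored_at_append_nth1[OF M(2), of "length A - Suc g"] that b by simp_all
  have c: "M (b + (length A + length B) - Suc h) = B ! (length B - Suc h)"
    "24 \<le> b + (length A + length B) - Suc h"
    "b + (length A + length B) - Suc h \<noteq> b + (length A + (length B + length S)) + j"
    if "h < length B"
  proof -
    have "length B - Suc h < length B" using that by simp
    then have "M (b + length A + (length B - Suc h)) = B ! (length B - Suc h)"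
      using stored_at_append_nth2[OF M(2), of "length B - Suc h"] by (simp add: nth_append)
    then show "M (b + (length A + length B) - Suc h) = B ! (length B - Suc h)"
      using that by (simp add: add.assoc)
    show "24 \<le> b + (length A + length B) - Suc h" using that b by simp
    show "b + (length A + length B) - Suc h \<noteq> b + (length A + (length B + length S)) + j"
      using that by simp
  qed
  have sA:
    "suffix_match A S j = g + (if g < length A \<and> A ! (length A - Suc g) = S ! j then 1 else 0)"
    using suffix_match_Suc[of j S A] M(3) by (simp add: g_def)
  have sB:
    "suffix_match B S j = h + (if h < length B \<and> B ! (length B - Suc h) = S ! j then 1 else 0)"
    using suffix_match_Suc[of j S B] M(3) by (simp add: h_def)
  \<comment> \<open>At a conditional jump simp turns the goal into a conjunction of implications;
    \<open>intro conjI impI\<close> separates the two branches, which are then executed in turn.\<close>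
  show ?thesis
    using b M(3) apply -
    apply (rule reaches_within_step; simp add: exec_simps R M(4))
    apply ((rule reaches_within_stop,
           simp del: upt_Suc add: backward_inv_def exec_simps upt_j M(1,2,5,6) tables sA sB)
        | (rule reaches_within_step;
           simp del: add_is_0 add_eq_0_iff_both_eq_0 add: exec_simps R M(4,5,6) y a c absdiff_eq_0_iff)
        | intro conjI impI)+
    done
qed

lemma prog_backward_exit:
  assumes inv: "backward_inv A B S b 0 M" and b: "24 + length (A @ B @ S) \<le> b"
  shows "reaches_within prog 5 (95, M) 130 (forward_inv A B S b 0)"
proof -
  have M: "layout A B S b M" "stored_at M b (A @ B @ S)" "M 14 = 0"
    "stored_at M (b + length (A @ B @ S) + 0) (map (suffix_match A S) [0..<Suc (length S)])"
    "stored_at M (b + length (A @ B @ S) + Suc (length S) + 0)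
       (map (suffix_match B S) [0..<Suc (length S)])"
    using inv unfolding backward_inv_def by blast+
  show ?thesis
    using b apply -
    apply ((rule reaches_within_stop, use M in \<open>simp del: upt_Suc add: forward_inv_def exec_simps\<close>)
        | (rule reaches_within_step; simp add: exec_simps M(3)))+
    done
qed

lemma prog_forward_step:
  assumes inv: "forward_inv A B S b k M" and k: "k < length S" and b: "24 + length (A @ B @ S) \<le> b"
  shows "reaches_within prog 40 (130, M) 130 (forward_inv A B S b (Suc k))"
proof -
  define P where "P = prune A B S k"
  define fa fb where "fa = match_len A P" and "fb = match_len B P"
  define da db where "da = suffix_match A S (Suc k)" and "db = suffix_match B S (Suc k)"
  have M: "layout A B S b M" "stored_at M b (A @ B @ S)"
    "stored_at M (b + length (A @ B @ S)) (map (suffix_match A S) [0..<Suc (length S)])"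
    "stored_at M (b + length (A @ B @ S) + Suc (length S))
       (map (suffix_match B S) [0..<Suc (length S)])"
    "M 14 = k" "M 15 = fa" "M 16 = fb" "M 17 = length P"
    "stored_at M (b + length (A @ B @ S) + Suc (length S) + Suc (length S)) P"
    using inv unfolding forward_inv_def P_def fa_def fb_def by blast+
  have R: "M 3 = 1" "M 4 = length S" "M 5 = length A" "M 6 = length B" "M 8 = b" "M 9 = b + length A"
    "M 10 = b + (length A + length B)" "M 11 = b + length (A @ B @ S)"
    "M 12 = b + length (A @ B @ S) + Suc (length S)"
    "M 13 = b + length (A @ B @ S) + Suc (length S) + Suc (length S)"
    using M(1) by (simp_all add: layout_def)
  have y: "M (b + (length A + length B) + k) = S ! k"
    using stored_at_append_nth2[of M b "A @ B" S k] M(2) k by simp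
  have d: "M (Suc (b + (length A + (length B + length S)) + k)) = da"
    "M (Suc (Suc (b + (length A + (length B + length S)) + length S + k))) = db"
    using stored_at_nth[OF M(3), of "Suc k"] stored_at_nth[OF M(4), of "Suc k"] k
    by (simp_all add: da_def db_def del: upt_Suc)
  have a: "M (b + fa) = A ! fa" if "fa < length A"
    using stored_at_append_nth1[OF M(2), of fa] that by (simp add: nth_append)
  have c: "M (b + length A + fb) = B ! fb" if "fb < length B"
    using stored_at_append_nth2[OF M(2), of fb] that by (simp add: nth_append)
  have pr: "prune A B S (Suc k) =
      (if length A \<le> fa + da \<and> length B \<le> fb + db then P else P @ [S ! k])"
    by (simp add: P_def fa_def fb_def da_def db_def common_supersequence_append_drop_iff)
  show ?thesis
    using b k apply -
    apply (rule reaches_within_step; simp add: exec_simps R M(5))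
    apply ((rule reaches_within_stop, use M(3,4,9) in
           \<open>simp del: upt_Suc prune.simps add: forward_inv_def exec_simps M(1,2,6-8) pr
              match_len_snoc stored_at_snoc fa_def[symmetric] fb_def[symmetric]\<close>)
        | (rule reaches_within_step;
           simp del: add_is_0 add_eq_0_iff_both_eq_0 add: exec_simps R M(5-8) y d a c absdiff_eq_0_iff)
        | intro conjI impI)+
    done
qed

lemma prog_forward_exit:
  assumes inv: "forward_inv A B S b (length S) M" and b: "24 + length (A @ B @ S) \<le> b"
  shows "reaches_within prog 6 (130, M) 174 (\<lambda>M. ram_output M = prune A B S (length S))"
proof -
  have M: "layout A B S b M" "M 14 = length S" "M 17 = length (prune A B S (length S))"
    "stored_at M (b + length (A @ B @ S) + Suc (length S) + Suc (length S)) (prune A B S (length S))"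
    using inv unfolding forward_inv_def by blast+
  have R: "M 4 = length S" "M 13 = b + length (A @ B @ S) + Suc (length S) + Suc (length S)"
    using M(1) by (simp_all add: layout_def)
  show ?thesis
    using b apply -
    apply ((rule reaches_within_stop, rule ram_output_eqI; use M(4) in simp)
        | (rule reaches_within_step; simp add: exec_simps R M(2,3)))+
    done
qed

lemma prog_empty_input:
  assumes "A @ B @ S = []"
  shows "reaches_within prog 3 (0, init_mem A B S) 174 (\<lambda>M. ram_output M = [])"
proof -
  have I: "init_mem A B S 0 = 0" "init_mem A B S (Suc 0) = 0" "init_mem A B S 2 = 0"
    using assms by (simp_all add: init_mem_def)
  show ?thesis
    apply ((rule reaches_within_stop, simp add: ram_output_def)
        | (rule reaches_within_step; simp add: exec_simps I))+
    done
qed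

lemma prog_copy_phase:
  assumes ne: "A @ B @ S \<noteq> []"
  defines "b \<equiv> 4 * length (A @ B @ S) + length B + 51"
  shows "reaches_within prog (78 + (length (A @ B @ S) - 21) * 9 + 10) (0, init_mem A B S) 95
    (backward_inv A B S b (length S))"
proof -
  define T where "T = length (A @ B @ S)"
  have b_ge: "24 + T \<le> b" by (simp add: b_def T_def)
  have "reaches_within prog (78 + (T - 21) * 9) (0, init_mem A B S) 78
      (copy_inv A B S b (21 + (T - 21)))"
  proof (rule reaches_within_seq[OF prog_prologue[OF ne, folded b_def]])
    fix M assume M: "copy_inv A B S b 21 M"
    show "reaches_within prog ((T - 21) * 9) (78, M) 78 (copy_inv A B S b (21 + (T - 21)))"
    proof (rule reaches_within_loop[where I = "\<lambda>k. copy_inv A B S b (21 + k)"])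
      fix k M assume "k < T - 21" "copy_inv A B S b (21 + k) M"
      then show "reaches_within prog 9 (78, M) 78 (copy_inv A B S b (21 + Suc k))"
        using prog_copy_step[of A B S b "21 + k" M] b_ge by (simp add: T_def)
    qed (use M in simp)
  qed
  then show ?thesis
    unfolding T_def[symmetric]
  proof (rule reaches_within_seq)
    fix M assume "copy_inv A B S b (21 + (T - 21)) M"
    then show "reaches_within prog 10 (78, M) 95 (backward_inv A B S b (length S))"
      using prog_copy_exit[of A B S b "21 + (T - 21)" M] b_ge by (simp add: T_def)
  qed
qed

lemma prog_backward_phase:
  assumes inv: "backward_inv A B S b (length S) M" and b: "24 + length (A @ B @ S) \<le> b"
  shows "reaches_within prog (length S * 35 + 5) (95, M) 130 (forward_inv A B S b 0)"
proof (rule reaches_within_seq)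
  show "reaches_within prog (length S * 35) (95, M) 95 (backward_inv A B S b (length S - length S))"
  proof (rule reaches_within_loop[where I = "\<lambda>k. backward_inv A B S b (length S - k)"])
    fix k M assume "k < length S" "backward_inv A B S b (length S - k) M"
    then show "reaches_within prog 35 (95, M) 95 (backward_inv A B S b (length S - Suc k))"
      using prog_backward_step[of A B S b "length S - Suc k" M] b by (simp add: Suc_diff_Suc)
  qed (use inv in simp)
qed (use prog_backward_exit b in simp)

lemma prog_forward_phase:
  assumes inv: "forward_inv A B S b 0 M" and b: "24 + length (A @ B @ S) \<le> b"
  shows "reaches_within prog (length S * 40 + 6) (130, M) 174
    (\<lambda>M. ram_output M = prune A B S (length S))"
proof (rule reaches_within_seq)
  show "reaches_within prog (length S * 40) (130, M) 130 (forward_inv A B S b (length S))"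
    by (rule reaches_within_loop[where I = "forward_inv A B S b"])
      (use inv prog_forward_step b in simp_all)
qed (use prog_forward_exit b in simp)

theorem prog_computes_prune:
  "reaches_within prog (100 * (length S + length A + length B + 1)) (0, init_mem A B S) (length prog)
     (\<lambda>M. ram_output M = prune A B S (length S))"
proof (cases "A @ B @ S = []")
  case True
  then have "S = []" by simp
  show ?thesis
    unfolding length_prog using prog_empty_input[OF True]
    by (rule reaches_within_mono) (simp_all add: \<open>S = []\<close>)
next
  case False
  define b where "b = 4 * length (A @ B @ S) + length B + 51"
  have b_ge: "24 + length (A @ B @ S) \<le> b" by (simp add: b_def)
  have "reaches_within prog (78 + (length (A @ B @ S) - 21) * 9 + 10 + (length S * 35 + 5))
      (0, init_mem A B S) 130 (forward_inv A B S b 0)"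
    using prog_copy_phase[OF False, folded b_def]
    by (rule reaches_within_seq) (rule prog_backward_phase[OF _ b_ge])
  then have "reaches_within prog (78 + (length (A @ B @ S) - 21) * 9 + 10 + (length S * 35 + 5) +
      (length S * 40 + 6)) (0, init_mem A B S) 174 (\<lambda>M. ram_output M = prune A B S (length S))"
    by (rule reaches_within_seq) (rule prog_forward_phase[OF _ b_ge])
  moreover have "78 + (length (A @ B @ S) - 21) * 9 + 10 + (length S * 35 + 5) + (length S * 40 + 6)
      \<le> 100 * (length S + length A + length B + 1)"
    by (simp add: diff_mult_distrib)
  ultimately show ?thesis
    unfolding length_prog by (rule reaches_within_mono) simp
qed

theorem mainTheorem4:
  shows "\<exists>(P :: instr list) (c :: nat).
     \<forall>A B S :: nat list. common_supersequence A B S \<longrightarrow>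
       (\<exists>t. t \<le> c * (length S + length A + length B + 1) \<and>
            halted P (run P t (0, init_mem A B S)) \<and>
            (let S' = ram_output (snd (run P t (0, init_mem A B S))) in
               minimal_common_supersequence A B S' \<and> subseq S' S))"
proof (rule exI[of _ prog], rule exI[of _ 100], intro allI impI)
  fix A B S :: "nat list"
  assume cs: "common_supersequence A B S"
  obtain t where "t \<le> 100 * (length S + length A + length B + 1)"
    "halted prog (run prog t (0, init_mem A B S))"
    "ram_output (snd (run prog t (0, init_mem A B S))) = prune A B S (length S)"
    using reaches_within_halted[OF prog_computes_prune] by blast
  then show "\<exists>t. t \<le> 100 * (length S + length A + length B + 1) \<and>
      halted prog (run prog t (0, init_mem A B S)) \<and>
      (let S' = ram_output (snd (run prog t (0, init_mem A B S))) in
         minimal_common_supersequence A B S' \<and> subseq S' S)"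
    using minimal_common_supersequence_prune[OF cs] subseq_prune_take[of "length S" S A B]
    by (intro exI[of _ t]) simp
qed

end
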